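(* Let $A$ be an $n\times m$ binary matrix with $R_{binary}(A)=n$. Then $A$ has the Augmentation property for the binary rank.
   Context: $R_{binary}(A)$ is the least $k$ such that $A=UV$ with $U\in\{0,1\}^{n\times k}$, $V\in\{0,1\}^{k\times m}$, ordinary arithmetic. $A$ has the Augmentation property for the binary rank if for every collection of binary column vectors $x_1,\dots,x_t$ of length $n$ with $R_{binary}(A|x_i)=R_{binary}(A)$ for all $i$, also $R_{binary}(A|x_1,\dots,x_t)=R_{binary}(A)$, where $(A|x_1,\dots,x_t)$ is $A$ with these columns appended. *)

theory Defs
  imports "Jordan_Normal_Form.Matrix"
begin

definition binary_mat :: "int mat \<Rightarrow> bool" where
  "binary_mat A \<longleftrightarrow> (\<forall>i<dim_row A. \<forall>j<dim_col A. A $$ (i,j) \<in> {0,1})"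

definition binary_vec :: "int vec \<Rightarrow> bool" where
  "binary_vec x \<longleftrightarrow> (\<forall>i<dim_vec x. x $ i \<in> {0,1})"

definition binary_factorizable :: "int mat \<Rightarrow> nat \<Rightarrow> bool" where
  "binary_factorizable A k \<longleftrightarrow>
     (\<exists>U V. U \<in> carrier_mat (dim_row A) k \<and> V \<in> carrier_mat k (dim_col A) \<and>
            binary_mat U \<and> binary_mat V \<and> A = U * V)"

definition binary_rank :: "int mat \<Rightarrow> nat" where
  "binary_rank A = (LEAST k. binary_factorizable A k)"

definition append_cols :: "int mat \<Rightarrow> int vec list \<Rightarrow> int mat" where
  "append_cols A xs = mat (dim_row A) (dim_col A + length xs)
     (\<lambda>(i,j). if j < dim_col A then A $$ (i,j) else (xs ! (j - dim_col A)) $ i)"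

definition augmentation_property :: "int mat \<Rightarrow> bool" where
  "augmentation_property A \<longleftrightarrow>
     (\<forall>xs. (\<forall>x\<in>set xs. dim_vec x = dim_row A \<and> binary_vec x) \<longrightarrow>
           (\<forall>x\<in>set xs. binary_rank (append_cols A [x]) = binary_rank A) \<longrightarrow>
           binary_rank (append_cols A xs) = binary_rank A)"

end

theory Submission
  imports Defs
begin

text \<open>Appending columns never lowers the binary rank, since a factorization of the augmented
  matrix restricts to one of \<open>A\<close>; and a binary matrix with \<open>n\<close> rows always factors as
  \<open>1\<^sub>n \<cdot> M\<close>, so its binary rank is at most \<open>n\<close>. When \<open>A\<close> already has rank \<open>n\<close>, every
  augmentation of \<open>A\<close> is therefore squeezed to rank exactly \<open>n\<close>, whatever columns are added.\<close>

lemma binary_rank_le: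
  "binary_factorizable A k \<Longrightarrow> binary_rank A \<le> k"
  unfolding binary_rank_def by (rule Least_le)

lemma binary_factorizable_binary_rank:
  "binary_factorizable A k \<Longrightarrow> binary_factorizable A (binary_rank A)"
  unfolding binary_rank_def by (rule LeastI)

lemma binary_factorizable_dim_row:
  assumes "binary_mat M"
  shows "binary_factorizable M (dim_row M)"
  unfolding binary_factorizable_def
proof (rule exI[of _ "1\<^sub>m (dim_row M)"], rule exI[of _ M], intro conjI)
  show "binary_mat (1\<^sub>m (dim_row M))"
    by (auto simp: binary_mat_def)
qed (use assms in auto)

lemma binary_rank_le_dim_row:
  "binary_mat M \<Longrightarrow> binary_rank M \<le> dim_row M"
  by (rule binary_rank_le[OF binary_factorizable_dim_row])

lemma binary_mat_append_cols:
  assumes "binary_mat A" and "\<forall>x\<in>set xs. dim_vec x = dim_row A \<and> binary_vec x"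
  shows "binary_mat (append_cols A xs)"
  using assms unfolding binary_mat_def append_cols_def binary_vec_def by auto

lemma binary_factorizable_append_colsD:
  assumes "binary_factorizable (append_cols A xs) k"
  shows "binary_factorizable A k"
proof -
  obtain U V where U: "U \<in> carrier_mat (dim_row A) k"
    and V: "V \<in> carrier_mat k (dim_col A + length xs)"
    and bin_U: "binary_mat U" and bin_V: "binary_mat V" and UV: "append_cols A xs = U * V"
    using assms unfolding binary_factorizable_def append_cols_def by auto
  define V' where "V' = mat k (dim_col A) (\<lambda>(i,j). V $$ (i,j))"
  have V': "V' \<in> carrier_mat k (dim_col A)"
    unfolding V'_def by auto
  have bin_V': "binary_mat V'"
    using bin_V V unfolding binary_mat_def V'_def by auto
  have "A = U * V'"
  proof (rule eq_matI)
    fix i j assume "i < dim_row (U * V')" and "j < dim_col (U * V')"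
    then have i: "i < dim_row A" and j: "j < dim_col A"
      using U V' by auto
    have "col V' j = col V j"
      using V j unfolding V'_def by (auto intro!: eq_vecI)
    then have "(U * V') $$ (i,j) = (U * V) $$ (i,j)"
      using U V V' i j by (simp add: times_mat_def)
    also have "\<dots> = A $$ (i,j)"
      using i j unfolding UV[symmetric] append_cols_def by simp
    finally show "A $$ (i,j) = (U * V') $$ (i,j)" by simp
  qed (use U V' in auto)
  then show ?thesis
    unfolding binary_factorizable_def using U V' bin_U bin_V' by blast
qed

lemma binary_rank_le_append_cols:
  assumes "binary_mat (append_cols A xs)"
  shows "binary_rank A \<le> binary_rank (append_cols A xs)"
proof -
  have "binary_factorizable (append_cols A xs) (binary_rank (append_cols A xs))"
    by (rule binary_factorizable_binary_rank[OF binary_factorizable_dim_row[OF assms]])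
  then show ?thesis
    by (intro binary_rank_le) (rule binary_factorizable_append_colsD)
qed

theorem mainTheorem10:
  fixes A :: "int mat" and n m :: nat
  assumes "A \<in> carrier_mat n m"
    and "binary_mat A"
    and "binary_rank A = n"
  shows "augmentation_property A"
  unfolding augmentation_property_def
proof (intro allI impI)
  fix xs assume cols: "\<forall>x\<in>set xs. dim_vec x = dim_row A \<and> binary_vec x"
  have bin: "binary_mat (append_cols A xs)"
    using binary_mat_append_cols[OF assms(2) cols] .
  have "binary_rank (append_cols A xs) \<le> n"
    using binary_rank_le_dim_row[OF bin] assms(1) by (simp add: append_cols_def)
  moreover have "binary_rank A \<le> binary_rank (append_cols A xs)"
    using binary_rank_le_append_cols[OF bin] .
  ultimately show "binary_rank (append_cols A xs) = binary_rank A"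
    using assms(3) by simp
qed

end
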